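(* Let $\alpha>0$ and $G:=\delta_{\bar B(0,\alpha)}$ on $\mathbb{R}^n$, the indicator function of the closed Euclidean ball of radius $\alpha$ centred at $0$. Let $(x^*,q^* )\in\operatorname{graph}\partial G$. Define $\gamma:=\|q^*\|/(2\alpha)$ if $q^*\neq0$; if $q^*=0$, let $\gamma\ge0$ be arbitrary. Then for all $x\in\bar B(0,\alpha)$ and all $q\in\partial G(x)$, \[ \inf_{\bar x\in(\partial G)^{-1}(q^* )}\langle q-q^*,x-\bar x\rangle\ge\gamma\operatorname{dist}^2(x,(\partial G)^{-1}(q^* )), \] i.e. $\partial G$ is $(I,\gamma I)$-strongly submonotone at $(x^*,q^* )$ with neighbourhood $\operatorname{dom}G=\bar B(0,\alpha)$.
   Context: $\partial G$ is the convex subdifferential (normal cone of the ball); $(\partial G)^{-1}(q^* )=\{x:q^*\in\partial G(x)\}$; $\operatorname{dist}(x,A)=\inf_{a\in A}\|x-a\|$. *)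

theory Defs
  imports "HOL-Analysis.Analysis"
begin

definition ind_fun :: "'a set \<Rightarrow> 'a \<Rightarrow> ereal" where
  "ind_fun C x = (if x \<in> C then 0 else \<infinity>)"

definition subdiff :: "('a::real_inner \<Rightarrow> ereal) \<Rightarrow> 'a \<Rightarrow> 'a set" where
  "subdiff f x = {q. \<bar>f x\<bar> \<noteq> \<infinity> \<and> (\<forall>y. f x + ereal (q \<bullet> (y - x)) \<le> f y)}"

end

theory Submission
  imports Defs
begin

text \<open>The subdifferential of the indicator of a ball is its normal cone. For \<open>q\<^sup>* \<noteq> 0\<close> the
  normal cone inverse \<open>(\<partial>G)\<^sup>-\<^sup>1(q\<^sup>*)\<close> is the single boundary point \<open>z = (\<alpha>/\<parallel>q\<^sup>*\<parallel>) q\<^sup>*\<close>, so the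
  infimum and the distance are both attained at \<open>z\<close>. Monotonicity of the normal cone gives
  \<open>\<langle>q, x - z\<rangle> \<ge> 0\<close>, and for \<open>x\<close> in the ball the identity
  \<open>\<parallel>x - z\<parallel>\<^sup>2 = \<parallel>x\<parallel>\<^sup>2 - 2\<langle>x, z\<rangle> + \<alpha>\<^sup>2 \<le> 2\<langle>z, z - x\<rangle>\<close> turns \<open>\<langle>-q\<^sup>*, x - z\<rangle> = (\<parallel>q\<^sup>*\<parallel>/\<alpha>)\<langle>z, z - x\<rangle>\<close>
  into the bound \<open>\<gamma>\<parallel>x - z\<parallel>\<^sup>2\<close>. For \<open>q\<^sup>* = 0\<close> the inverse is the whole ball, which contains \<open>x\<close>,
  so the right-hand side vanishes.\<close>

lemma subdiff_ind_fun_iff: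
  "q \<in> subdiff (ind_fun C) x \<longleftrightarrow> x \<in> C \<and> (\<forall>y\<in>C. q \<bullet> (y - x) \<le> 0)"
  unfolding subdiff_def ind_fun_def
  by (auto split: if_splits simp: zero_ereal_def[symmetric])

lemma subdiff_ind_fun_inner_nonneg:
  assumes "q \<in> subdiff (ind_fun C) x" and "z \<in> C"
  shows "q \<bullet> (x - z) \<ge> 0"
proof -
  have "q \<bullet> (z - x) \<le> 0" using assms by (simp add: subdiff_ind_fun_iff)
  then show ?thesis by (simp add: inner_diff_right)
qed

lemma subdiff_ind_fun_cball_eq:
  fixes q z :: "'a::real_inner"
  assumes q: "q \<in> subdiff (ind_fun (cball 0 \<alpha>)) z" and "q \<noteq> 0"
  shows "z = (\<alpha> / norm q) *\<^sub>R q"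
proof -
  have nq: "norm q > 0" using \<open>q \<noteq> 0\<close> by simp
  have z: "norm z \<le> \<alpha>" using q by (simp add: subdiff_ind_fun_iff)
  define z0 where "z0 = (\<alpha> / norm q) *\<^sub>R q"
  have "z0 \<in> cball 0 \<alpha>" using order_trans[OF norm_ge_zero z] nq by (simp add: z0_def)
  then have "q \<bullet> (z0 - z) \<le> 0" using q by (simp add: subdiff_ind_fun_iff)
  moreover have "q \<bullet> z0 = \<alpha> * norm q"
    using nq by (simp add: z0_def power2_norm_eq_inner[symmetric] power2_eq_square)
  ultimately have lower: "\<alpha> * norm q \<le> q \<bullet> z" by (simp add: inner_diff_right)
  have upper: "q \<bullet> z \<le> norm q * norm z" by (rule norm_cauchy_schwarz)
  have "norm q * \<alpha> \<le> norm q * norm z" using lower upper by (simp add: mult.commute)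
  then have norm_z: "norm z = \<alpha>" using z nq by simp
  with lower upper have "q \<bullet> z = norm q * norm z" by (simp add: mult.commute)
  then have "norm q *\<^sub>R z = norm z *\<^sub>R q" by (rule norm_cauchy_schwarz_eq[THEN iffD1])
  then have "(1 / norm q) *\<^sub>R (norm q *\<^sub>R z) = (1 / norm q) *\<^sub>R (norm z *\<^sub>R q)" by simp
  then show ?thesis using nq norm_z by simp
qed

lemma norm_diff_sq_le_inner_of_norm_le:
  fixes x z :: "'a::real_inner"
  assumes "norm x \<le> norm z"
  shows "(norm (x - z))\<^sup>2 \<le> 2 * (z \<bullet> (z - x))"
proof -
  have "(norm x)\<^sup>2 \<le> (norm z)\<^sup>2" using assms by (simp add: power_mono)
  then show ?thesis
    by (simp add: power2_norm_eq_inner inner_diff_left inner_diff_right inner_commute)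
qed

lemma subdiff_ind_fun_cball_quadratic_growth:
  fixes q z x :: "'a::real_inner"
  assumes "\<alpha> > 0" and q: "q \<in> subdiff (ind_fun (cball 0 \<alpha>)) z" "q \<noteq> 0"
    and x: "x \<in> cball 0 \<alpha>"
  shows "norm q / (2 * \<alpha>) * (norm (x - z))\<^sup>2 \<le> q \<bullet> (z - x)"
proof -
  have z: "z = (\<alpha> / norm q) *\<^sub>R q" by (rule subdiff_ind_fun_cball_eq[OF q])
  have nq: "norm q > 0" using \<open>q \<noteq> 0\<close> by simp
  have "norm z = \<alpha>" using nq \<open>\<alpha> > 0\<close> by (simp add: z)
  then have "(norm (x - z))\<^sup>2 \<le> 2 * (z \<bullet> (z - x))"
    using x by (intro norm_diff_sq_le_inner_of_norm_le) simp
  also have "z \<bullet> (z - x) = \<alpha> / norm q * (q \<bullet> (z - x))"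
    by (subst (1) z) simp
  finally show ?thesis using nq \<open>\<alpha> > 0\<close> by (simp add: field_simps)
qed

theorem lemma5p10:
  fixes \<alpha> \<gamma> :: real and xs qs :: "real ^ 'n"
  assumes "\<alpha> > 0"
    and "qs \<in> subdiff (ind_fun (cball 0 \<alpha>)) xs"
    and "qs \<noteq> 0 \<Longrightarrow> \<gamma> = norm qs / (2 * \<alpha>)"
    and "qs = 0 \<Longrightarrow> \<gamma> \<ge> 0"
  shows "\<forall>x \<in> cball 0 \<alpha>. \<forall>q \<in> subdiff (ind_fun (cball 0 \<alpha>)) x.
           (INF xb \<in> {z. qs \<in> subdiff (ind_fun (cball 0 \<alpha>)) z}. (q - qs) \<bullet> (x - xb))
             \<ge> \<gamma> * (infdist x {z. qs \<in> subdiff (ind_fun (cball 0 \<alpha>)) z})\<^sup>2"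
proof (intro ballI)
  fix x q :: "real ^ 'n"
  assume x: "x \<in> cball 0 \<alpha>" and q: "q \<in> subdiff (ind_fun (cball 0 \<alpha>)) x"
  define S where "S = {z. qs \<in> subdiff (ind_fun (cball (0::real ^ 'n) \<alpha>)) z}"
  have "\<gamma> * (infdist x S)\<^sup>2 \<le> (q - qs) \<bullet> (x - z)" if "z \<in> S" for z
  proof (cases "qs = 0")
    case True
    then have "x \<in> S" using x by (simp add: S_def subdiff_ind_fun_iff)
    moreover have "q \<bullet> (x - z) \<ge> 0"
      using \<open>z \<in> S\<close> by (intro subdiff_ind_fun_inner_nonneg[OF q]) (simp add: S_def subdiff_ind_fun_iff)
    ultimately show ?thesis using True by simp
  next
    case False
    have z: "qs \<in> subdiff (ind_fun (cball 0 \<alpha>)) z" using \<open>z \<in> S\<close> by (simp add: S_def)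
    have "infdist x S \<le> norm (x - z)" using \<open>z \<in> S\<close> by (metis infdist_le dist_norm)
    then have "\<gamma> * (infdist x S)\<^sup>2 \<le> \<gamma> * (norm (x - z))\<^sup>2"
      using assms(3)[OF False] \<open>\<alpha> > 0\<close> by (intro mult_left_mono power_mono infdist_nonneg) auto
    also have "\<dots> \<le> qs \<bullet> (z - x)"
      using subdiff_ind_fun_cball_quadratic_growth[OF \<open>\<alpha> > 0\<close> z False x] assms(3)[OF False] by simp
    also have "\<dots> \<le> (q - qs) \<bullet> (x - z)"
    proof -
      have "z \<in> cball 0 \<alpha>" using z by (simp add: subdiff_ind_fun_iff)
      then have "q \<bullet> (x - z) \<ge> 0" by (rule subdiff_ind_fun_inner_nonneg[OF q])
      then show ?thesis by (simp add: inner_diff_left inner_diff_right)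
    qed
    finally show ?thesis .
  qed
  moreover have "S \<noteq> {}" using assms(2) by (auto simp: S_def)
  ultimately show "(INF xb \<in> {z. qs \<in> subdiff (ind_fun (cball 0 \<alpha>)) z}. (q - qs) \<bullet> (x - xb))
             \<ge> \<gamma> * (infdist x {z. qs \<in> subdiff (ind_fun (cball 0 \<alpha>)) z})\<^sup>2"
    unfolding S_def[symmetric] by (intro cINF_greatest) auto
qed

end
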